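(* Let $m,n\geq 6$ and $r\geq 2$. Then $\varphi(\mathcal{P}^r_{m-5}\cup\mathcal{W}_{n-1},x)=\varphi(\mathcal{P}^r_{n-5}\cup\mathcal{W}_{m-1},x)$.
   Context: The loose path $\mathcal{P}^r_t=v_1e_1v_2\cdots v_te_tv_{t+1}$ of length $t\geq 1$ has edges $e_i=\{v_i,u_{i,1},\dots,u_{i,r-2},v_{i+1}\}$, all listed vertices distinct (for $r=2$ it is the ordinary path with $t$ edges). For $N\geq 5$, $\mathcal{W}_N$ is the $r$-uniform hypergraph obtained from the loose path $\mathcal{P}^r_{N-2}$ (vertices $v_1,\dots,v_{N-1}$) by attaching one pendent edge (an edge containing one existing vertex and $r-1$ new vertices) at $v_2$ and one at $v_{N-2}$. $\cup$ denotes disjoint union. For an $r$-uniform hypergraph $\mathcal{K}$ on $n'$ vertices, $m(\mathcal{K},k)$ is the number of sets of $k$ pairwise disjoint edges ($m(\mathcal{K},0)=1$) and $\varphi(\mathcal{K},x)=\sum_{k\geq0}(-1)^km(\mathcal{K},k)x^{n'-kr}$ is the matching polynomial. *)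

theory Defs
  imports "HOL-Computational_Algebra.Polynomial"
begin

type_synonym 'a hypergraph = "'a set \<times> 'a set set"

text \<open>Vertex names: V i = v_i, U i j = u_{i,j}, A j / B j = new vertices of the
  two pendent edges of W_N.\<close>
datatype vtx = V nat | U nat nat | A nat | B nat

definition path_edge :: "nat \<Rightarrow> nat \<Rightarrow> vtx set" where
  "path_edge r i = {V i, V (Suc i)} \<union> {U i j | j. 1 \<le> j \<and> j \<le> r - 2}"

definition loose_path :: "nat \<Rightarrow> nat \<Rightarrow> vtx hypergraph" where
  "loose_path r t =
     (let E = {path_edge r i | i. 1 \<le> i \<and> i \<le> t} in (\<Union>E, E))"

definition W_graph :: "nat \<Rightarrow> nat \<Rightarrow> vtx hypergraph" where
  "W_graph r N =
     (let E = {path_edge r i | i. 1 \<le> i \<and> i \<le> N - 2}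
              \<union> {insert (V 2) {A j | j. 1 \<le> j \<and> j \<le> r - 1},
                 insert (V (N - 2)) {B j | j. 1 \<le> j \<and> j \<le> r - 1}}
      in (\<Union>E, E))"

definition disj_union :: "'a hypergraph \<Rightarrow> 'b hypergraph \<Rightarrow> ('a + 'b) hypergraph" where
  "disj_union G H = (Inl ` fst G \<union> Inr ` fst H, (image Inl) ` snd G \<union> (image Inr) ` snd H)"

definition matching_number :: "'a hypergraph \<Rightarrow> nat \<Rightarrow> nat" where
  "matching_number K k = card {M. M \<subseteq> snd K \<and> card M = k \<and> pairwise disjnt M}"

definition matching_poly :: "nat \<Rightarrow> 'a hypergraph \<Rightarrow> int poly" where
  "matching_poly r K = (\<Sum>k\<le>card (snd K).
      monom ((-1) ^ k * int (matching_number K k)) (card (fst K) - k * r))"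

end

theory Submission
  imports Defs
begin

text \<open>The matching polynomial of K is determined by the number of vertices of K and by the
  generating polynomial g(K) = sum of m(K,k) X^k of its matchings. This polynomial obeys the
  deletion recurrence g(E + e) = g(E) + X g(edges of E disjoint from e) and is multiplicative
  over disjoint unions. For a loose path with a edges it is therefore the Fibonacci-type
  polynomial p_a, and for W_(b+4) it is (1 + 4X) p_b. Both hypergraphs of the theorem thus have
  generating polynomial (1 + 4X) p_(m-5) p_(n-5), and they have the same number of vertices.\<close>

section \<open>The generating polynomial of matchings\<close>

definition matchings :: "'a set set \<Rightarrow> 'a set set set" where
  "matchings E = {M. M \<subseteq> E \<and> pairwise disjnt M}"

definition matching_gen_poly :: "'a set set \<Rightarrow> int poly" where
  "matching_gen_poly E = (\<Sum>M\<in>matchings E. monom 1 (card M))"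

lemma finite_matchings: "finite E \<Longrightarrow> finite (matchings E)"
  unfolding matchings_def by (rule finite_subset[of _ "Pow E"]) auto

lemma coeff_matching_gen_poly:
  assumes "finite E"
  shows "coeff (matching_gen_poly E) k = int (card {M \<in> matchings E. card M = k})"
proof -
  have "coeff (matching_gen_poly E) k = (\<Sum>M\<in>matchings E. if card M = k then 1 else 0)"
    unfolding matching_gen_poly_def coeff_sum coeff_monom by (rule sum.cong) auto
  also have "\<dots> = int (card {M \<in> matchings E. card M = k})"
    using finite_matchings[OF assms] by (simp add: sum.If_cases Int_def)
  finally show ?thesis .
qed

lemma matching_gen_poly_empty [simp]: "matching_gen_poly {} = 1"
proof -
  have "matchings ({} :: 'a set set) = {{}}" unfolding matchings_def by auto
  then show ?thesis unfolding matching_gen_poly_def by (simp add: monom_0 one_pCons)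
qed

lemma matchings_insert:
  assumes "e \<notin> E" "e \<noteq> {}"
  shows "matchings (insert e E) = matchings E \<union> insert e ` matchings {f \<in> E. disjnt f e}"
proof (intro equalityI subsetI)
  fix M assume M: "M \<in> matchings (insert e E)"
  show "M \<in> matchings E \<union> insert e ` matchings {f \<in> E. disjnt f e}"
  proof (cases "e \<in> M")
    case True
    then have "M - {e} \<in> matchings {f \<in> E. disjnt f e}"
      using M unfolding matchings_def by (auto simp: pairwise_def)
    moreover have "M = insert e (M - {e})" using True by auto
    ultimately show ?thesis by blast
  qed (use M in \<open>auto simp: matchings_def\<close>)
next
  fix M assume "M \<in> matchings E \<union> insert e ` matchings {f \<in> E. disjnt f e}"
  then consider "M \<in> matchings E"
    | M' where "M = insert e M'" "M' \<subseteq> E" "\<forall>f\<in>M'. disjnt f e" "pairwise disjnt M'"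
    unfolding matchings_def by blast
  then show "M \<in> matchings (insert e E)"
  proof cases
    case 2
    then show ?thesis by (auto simp: matchings_def pairwise_insert disjnt_commute)
  qed (auto simp: matchings_def)
qed

lemma matching_gen_poly_insert:
  assumes "finite E" "e \<notin> E" "e \<noteq> {}"
  shows "matching_gen_poly (insert e E) =
    matching_gen_poly E + [:0, 1:] * matching_gen_poly {f \<in> E. disjnt f e}"
proof -
  let ?D = "{f \<in> E. disjnt f e}"
  have e_notin: "e \<notin> M" if "M \<in> matchings ?D" for M
    using that assms(3) by (auto simp: matchings_def)
  have fin: "finite M" if "M \<in> matchings ?D" for M
    using that assms(1) by (auto simp: matchings_def intro: finite_subset)
  have "inj_on (insert e) (matchings ?D)"
    by (rule inj_onI) (metis Diff_insert_absorb e_notin)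
  then have "(\<Sum>M\<in>insert e ` matchings ?D. monom (1::int) (card M))
      = (\<Sum>M\<in>matchings ?D. [:0, 1:] * monom 1 (card M))"
    using e_notin fin by (simp add: sum.reindex monom_Suc)
  moreover have "matchings E \<inter> insert e ` matchings ?D = {}"
    using assms(2) by (auto simp: matchings_def)
  ultimately show ?thesis
    using assms finite_matchings[of E] finite_matchings[of ?D]
    by (simp add: matchings_insert matching_gen_poly_def sum.union_disjoint sum_distrib_left)
qed

lemma matching_gen_poly_relabel:
  assumes "inj f"
  shows "matching_gen_poly (image f ` E) = matching_gen_poly E"
proof -
  have inj_img: "inj (image f)"
    using assms by (simp add: inj_image_eq_iff inj_def)
  have disjnt_img: "disjnt (f ` x) (f ` y) \<longleftrightarrow> disjnt x y" for x y
    using assms by (simp add: disjnt_def image_Int[symmetric])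
  have pairwise_img: "pairwise disjnt (image f ` M) \<longleftrightarrow> pairwise disjnt M" for M
    using inj_img by (simp add: pairwise_image disjnt_img inj_eq pairwise_def)
  have "matchings (image f ` E) = image (image f) ` matchings E"
    by (auto simp: matchings_def subset_image_iff pairwise_img)
  moreover have "card (image f ` M) = card M" for M
    using inj_img by (simp add: card_image inj_on_subset)
  moreover have "inj_on (image (image f)) (matchings E)"
    using inj_img by (simp add: inj_on_def inj_image_eq_iff)
  ultimately show ?thesis
    unfolding matching_gen_poly_def by (simp add: sum.reindex)
qed

lemma pairwise_disjnt_Un:
  assumes "pairwise disjnt M1" "pairwise disjnt M2" "\<forall>x\<in>M1. \<forall>y\<in>M2. disjnt x y"
  shows "pairwise disjnt (M1 \<union> M2)"
  using assms by (metis Un_iff disjnt_commute pairwise_def)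

lemma matchings_Un:
  assumes "\<forall>x\<in>E1. \<forall>y\<in>E2. disjnt x y"
  shows "matchings (E1 \<union> E2) = (\<lambda>(M1, M2). M1 \<union> M2) ` (matchings E1 \<times> matchings E2)"
proof (intro equalityI subsetI)
  fix M assume "M \<in> matchings (E1 \<union> E2)"
  then have pw: "pairwise disjnt M" and sub: "M \<subseteq> E1 \<union> E2"
    by (simp_all add: matchings_def)
  then have "(M \<inter> E1, M \<inter> E2) \<in> matchings E1 \<times> matchings E2"
    by (simp add: matchings_def pairwise_subset[OF pw])
  moreover have "M = (\<lambda>(M1, M2). M1 \<union> M2) (M \<inter> E1, M \<inter> E2)" using sub by auto
  ultimately show "M \<in> (\<lambda>(M1, M2). M1 \<union> M2) ` (matchings E1 \<times> matchings E2)"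
    by (rule rev_image_eqI)
next
  fix M assume "M \<in> (\<lambda>(M1, M2). M1 \<union> M2) ` (matchings E1 \<times> matchings E2)"
  then obtain M1 M2 where "M = M1 \<union> M2" "M1 \<in> matchings E1" "M2 \<in> matchings E2" by auto
  with assms show "M \<in> matchings (E1 \<union> E2)"
    by (auto simp: matchings_def intro!: pairwise_disjnt_Un)
qed

lemma matching_gen_poly_Un:
  assumes "finite E1" "finite E2" "E1 \<inter> E2 = {}" "\<forall>x\<in>E1. \<forall>y\<in>E2. disjnt x y"
  shows "matching_gen_poly (E1 \<union> E2) = matching_gen_poly E1 * matching_gen_poly E2"
proof -
  let ?ME = "matchings E1 \<times> matchings E2"
  have "inj_on (\<lambda>(M1, M2). M1 \<union> M2) ?ME"
    using assms(3) by (clarsimp simp: inj_on_def matchings_def) blast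
  then have "matching_gen_poly (E1 \<union> E2) = (\<Sum>(M1, M2)\<in>?ME. monom 1 (card (M1 \<union> M2)))"
    unfolding matching_gen_poly_def matchings_Un[OF assms(4)]
    by (simp add: sum.reindex case_prod_unfold)
  also have "\<dots> = (\<Sum>(M1, M2)\<in>?ME. monom 1 (card M1) * monom 1 (card M2))"
  proof (rule sum.cong, simp, clarify)
    fix M1 M2 assume "M1 \<in> matchings E1" "M2 \<in> matchings E2"
    with assms have "card (M1 \<union> M2) = card M1 + card M2"
      by (intro card_Un_disjoint) (auto simp: matchings_def intro: finite_subset)
    then show "monom (1::int) (card (M1 \<union> M2)) = monom 1 (card M1) * monom 1 (card M2)"
      by (simp add: mult_monom)
  qed
  also have "\<dots> = matching_gen_poly E1 * matching_gen_poly E2"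
    unfolding matching_gen_poly_def sum_product sum.cartesian_product by (rule sum.cong) auto
  finally show ?thesis .
qed

lemma matching_number_eq_coeff:
  assumes "finite (snd K)"
  shows "int (matching_number K k) = coeff (matching_gen_poly (snd K)) k"
  unfolding matching_number_def coeff_matching_gen_poly[OF assms]
  by (rule arg_cong[where f = "\<lambda>S. int (card S)"]) (auto simp: matchings_def)

lemma matching_poly_eq_sum:
  assumes "finite (snd K)" "card (snd K) \<le> N"
  shows "matching_poly r K =
    (\<Sum>k\<le>N. monom ((-1) ^ k * coeff (matching_gen_poly (snd K)) k) (card (fst K) - k * r))"
  unfolding matching_poly_def matching_number_eq_coeff[OF assms(1)]
proof (rule sum.mono_neutral_left)
  show "\<forall>k\<in>{..N} - {..card (snd K)}.
      monom ((-1) ^ k * coeff (matching_gen_poly (snd K)) k) (card (fst K) - k * r) = 0"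
  proof
    fix k assume "k \<in> {..N} - {..card (snd K)}"
    then have "{M \<in> matchings (snd K). card M = k} = {}"
      using assms(1) by (auto simp: matchings_def dest: card_mono)
    then have "coeff (matching_gen_poly (snd K)) k = 0"
      by (simp only: coeff_matching_gen_poly[OF assms(1)] card.empty of_nat_0)
    then show "monom ((-1) ^ k * coeff (matching_gen_poly (snd K)) k) (card (fst K) - k * r) = 0"
      by simp
  qed
qed (use assms(2) in auto)

lemma matching_poly_eqI:
  assumes "finite (snd K)" "finite (snd L)" "card (fst K) = card (fst L)"
    and "matching_gen_poly (snd K) = matching_gen_poly (snd L)"
  shows "matching_poly r K = matching_poly r L"
  using assms matching_poly_eq_sum[of K "card (snd K) + card (snd L)" r]
    matching_poly_eq_sum[of L "card (snd K) + card (snd L)" r]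
  by simp

lemma Inl_image_eq_Inr_image_iff: "Inl ` x = Inr ` y \<longleftrightarrow> x = {} \<and> y = {}"
proof
  assume eq: "Inl ` x = Inr ` y"
  have "x = {}"
  proof (rule equals0I)
    fix a assume "a \<in> x"
    then have "Inl a \<in> Inr ` y" using eq by blast
    then show False by blast
  qed
  with eq show "x = {} \<and> y = {}" by simp
qed simp

lemma finite_edges_disj_union:
  "finite (snd G) \<Longrightarrow> finite (snd H) \<Longrightarrow> finite (snd (disj_union G H))"
  by (simp add: disj_union_def)

lemma card_vertices_disj_union:
  assumes "finite (fst G)" "finite (fst H)"
  shows "card (fst (disj_union G H)) = card (fst G) + card (fst H)"
  using assms unfolding disj_union_def fst_conv by (subst card_Un_disjoint) (auto simp: card_image)

lemma matching_gen_poly_disj_union: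
  fixes G :: "'a hypergraph" and H :: "'b hypergraph"
  assumes "finite (snd G)" "finite (snd H)" "{} \<notin> snd G"
  shows "matching_gen_poly (snd (disj_union G H)) =
    matching_gen_poly (snd G) * matching_gen_poly (snd H)"
proof -
  have "matching_gen_poly (snd (disj_union G H)) =
      matching_gen_poly (image (Inl :: 'a \<Rightarrow> 'a + 'b) ` snd G) *
      matching_gen_poly (image (Inr :: 'b \<Rightarrow> 'a + 'b) ` snd H)"
    unfolding disj_union_def snd_conv
  proof (rule matching_gen_poly_Un)
    show "image Inl ` snd G \<inter> image Inr ` snd H = {}"
      using assms(3) by (auto simp: Inl_image_eq_Inr_image_iff)
  qed (use assms in \<open>auto simp: disjnt_def\<close>)
  then show ?thesis by (simp add: matching_gen_poly_relabel)
qed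

section \<open>Loose paths and the hypergraphs W_N\<close>

lemma V_in_path_edge_iff: "V k \<in> path_edge r i \<longleftrightarrow> k = i \<or> k = Suc i"
  by (auto simp: path_edge_def)

lemma path_edge_nonempty: "path_edge r i \<noteq> {}"
  by (auto simp: path_edge_def)

lemma inj_path_edge: "inj (path_edge r)"
proof (rule injI)
  fix i j assume eq: "path_edge r i = path_edge r j"
  have "V i \<in> path_edge r j" "V j \<in> path_edge r i"
    using V_in_path_edge_iff[of i r i] V_in_path_edge_iff[of j r j] by (simp_all add: eq)
  then show "i = j" by (auto simp: V_in_path_edge_iff)
qed

lemma disjnt_path_edge_iff: "disjnt (path_edge r i) (path_edge r j) \<longleftrightarrow> Suc i < j \<or> Suc j < i"
proof
  assume "disjnt (path_edge r i) (path_edge r j)"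
  then have "V k \<notin> path_edge r i \<or> V k \<notin> path_edge r j" for k
    by (auto simp: disjnt_def)
  then show "Suc i < j \<or> Suc j < i"
    unfolding V_in_path_edge_iff by (metis not_less_eq linorder_neqE_nat)
qed (auto simp: path_edge_def disjnt_def)

text \<open>For n = 0 the truncated \<open>n - 1\<close> makes the second equation read path_poly 1 = 1 + X,
  so one equation covers both initial values.\<close>
fun path_poly :: "nat \<Rightarrow> int poly" where
  "path_poly 0 = 1"
| "path_poly (Suc n) = path_poly n + [:0, 1:] * path_poly (n - 1)"

lemma matching_gen_poly_path: "matching_gen_poly (path_edge r ` {s..<s + t}) = path_poly t"
proof (induction t rule: path_poly.induct)
  case (2 n)
  let ?e = "path_edge r (s + n)"
  have "path_edge r ` {s..<s + Suc n} = insert ?e (path_edge r ` {s..<s + n})"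
    by (simp add: atLeastLessThanSuc)
  moreover have "?e \<notin> path_edge r ` {s..<s + n}"
    using inj_path_edge by (auto simp: inj_eq)
  moreover have "{f \<in> path_edge r ` {s..<s + n}. disjnt f ?e} = path_edge r ` {s..<s + (n - 1)}"
    by (auto simp: disjnt_path_edge_iff)
  ultimately show ?case
    using 2 by (simp add: matching_gen_poly_insert path_edge_nonempty)
qed simp

lemma loose_path_eq: "loose_path r t = (\<Union> (path_edge r ` {1..t}), path_edge r ` {1..t})"
proof -
  have "{path_edge r i | i. 1 \<le> i \<and> i \<le> t} = path_edge r ` {1..t}" by auto
  then show ?thesis by (simp add: loose_path_def)
qed

lemma Union_path_edges:
  assumes "1 \<le> t"
  shows "\<Union> (path_edge r ` {1..t}) = V ` {1..t + 1} \<union> (\<lambda>(i, j). U i j) ` ({1..t} \<times> {1..r - 2})"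
proof (intro equalityI subsetI)
  fix x assume "x \<in> V ` {1..t + 1} \<union> (\<lambda>(i, j). U i j) ` ({1..t} \<times> {1..r - 2})"
  then consider k where "x = V k" "1 \<le> k" "k \<le> t" | "x = V (Suc t)"
    | i j where "x = U i j" "1 \<le> i" "i \<le> t" "1 \<le> j" "j \<le> r - 2"
    by force
  then show "x \<in> \<Union> (path_edge r ` {1..t})"
    by cases (use assms in \<open>force simp: path_edge_def\<close>)+
qed (auto simp: path_edge_def)

lemma card_Union_path_edges:
  assumes "1 \<le> t" "2 \<le> r"
  shows "card (\<Union> (path_edge r ` {1..t})) = t * (r - 1) + 1"
proof -
  have "card (\<Union> (path_edge r ` {1..t})) =
      card (V ` {1..t + 1}) + card ((\<lambda>(i, j). U i j) ` ({1..t} \<times> {1..r - 2}))"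
    unfolding Union_path_edges[OF assms(1)] by (rule card_Un_disjoint) auto
  also have "\<dots> = (t + 1) + t * (r - 2)"
    by (subst card_image; auto simp: inj_on_def)+
  also have "\<dots> = t * (r - 1) + 1"
    using assms(2) by (cases r) (auto simp: algebra_simps)
  finally show ?thesis .
qed

definition pendant_edge :: "(nat \<Rightarrow> vtx) \<Rightarrow> nat \<Rightarrow> nat \<Rightarrow> vtx set" where
  "pendant_edge W r k = insert (V k) (W ` {1..r - 1})"

lemma W_graph_eq:
  "W_graph r N = (let E = insert (pendant_edge A r 2) (insert (pendant_edge B r (N - 2))
      (path_edge r ` {1..N - 2})) in (\<Union> E, E))"
proof -
  have "{path_edge r i | i. 1 \<le> i \<and> i \<le> N - 2} = path_edge r ` {1..N - 2}"
    "{A j | j. 1 \<le> j \<and> j \<le> r - 1} = A ` {1..r - 1}"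
    "{B j | j. 1 \<le> j \<and> j \<le> r - 1} = B ` {1..r - 1}"
    by auto
  then show ?thesis by (simp add: W_graph_def pendant_edge_def insert_commute)
qed

lemma disjnt_path_edge_pendant_edge_iff:
  assumes "W \<in> {A, B}"
  shows "disjnt (path_edge r i) (pendant_edge W r k) \<longleftrightarrow> k \<noteq> i \<and> k \<noteq> Suc i"
  using assms by (auto simp: path_edge_def pendant_edge_def disjnt_def)

lemma pendant_edge_not_path_edge:
  assumes "W \<in> {A, B}" "2 \<le> r"
  shows "pendant_edge W r k \<notin> range (path_edge r)"
proof -
  have "W 1 \<in> pendant_edge W r k" using assms(2) by (simp add: pendant_edge_def)
  moreover have "W 1 \<notin> path_edge r i" for i using assms(1) by (auto simp: path_edge_def)
  ultimately show ?thesis by auto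
qed

text \<open>The pendant edge sits at the second-to-last vertex of the path, so it meets exactly the
  last two path edges.\<close>
lemma matching_gen_poly_path_pendant:
  assumes "W \<in> {A, B}" "2 \<le> r"
  shows "matching_gen_poly (insert (pendant_edge W r (s + c - 1)) (path_edge r ` {s..<s + c})) =
    path_poly c + [:0, 1:] * path_poly (c - 2)"
proof -
  let ?f = "pendant_edge W r (s + c - 1)"
  have "{e \<in> path_edge r ` {s..<s + c}. disjnt e ?f} = path_edge r ` {s..<s + (c - 2)}"
    using assms(1) by (auto simp: disjnt_path_edge_pendant_edge_iff)
  moreover have "?f \<notin> path_edge r ` {s..<s + c}"
    using pendant_edge_not_path_edge[OF assms] by auto
  ultimately show ?thesis
    by (simp add: matching_gen_poly_insert matching_gen_poly_path pendant_edge_def)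
qed

lemma path_poly_two_pendants:
  assumes "1 \<le> c"
  shows "path_poly (c + 2) + [:0, 1:] * path_poly c
      + [:0, 1:] * (path_poly c + [:0, 1:] * path_poly (c - 2)) = [:1, 4:] * path_poly c"
proof -
  have "path_poly (c + 2) = path_poly c + [:0, 1:] * path_poly (c - 1) + [:0, 1:] * path_poly c"
    using assms by (cases c) simp_all
  moreover have "path_poly c = path_poly (c - 1) + [:0, 1:] * path_poly (c - 2)"
    using assms by (cases c) simp_all
  moreover have "[:1, 4:] = 1 + 4 * ([:0, 1:] :: int poly)"
    by (simp add: one_pCons numeral_poly)
  ultimately show ?thesis by algebra
qed

lemma matching_gen_poly_W_graph:
  assumes "2 \<le> r" "5 \<le> N"
  shows "matching_gen_poly (snd (W_graph r N)) = [:1, 4:] * path_poly (N - 4)"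
proof -
  define c where "c = N - 4"
  have N: "N = c + 4" "1 \<le> c" using assms(2) by (simp_all add: c_def)
  let ?fa = "pendant_edge A r 2" and ?fb = "pendant_edge B r (c + 2)"
  let ?E = "insert ?fb (path_edge r ` {1..<1 + (c + 2)})"
  have "{1..N - 2} = {1..<1 + (c + 2)}" using N by auto
  then have edges: "snd (W_graph r N) = insert ?fa ?E"
    by (simp add: W_graph_eq N(1))
  have "disjnt ?fb ?fa"
    using N(2) by (auto simp: pendant_edge_def disjnt_def)
  then have "{e \<in> ?E. disjnt e ?fa} = insert ?fb (path_edge r ` {3..<3 + c})"
    by (auto simp: disjnt_path_edge_pendant_edge_iff)
  moreover have "?fa \<notin> ?E"
  proof -
    have "?fa \<noteq> ?fb"
      using \<open>disjnt ?fb ?fa\<close> by (metis disjnt_self_iff_empty insert_not_empty pendant_edge_def)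
    then show ?thesis using pendant_edge_not_path_edge[of A r 2] assms(1) by auto
  qed
  ultimately have "matching_gen_poly (snd (W_graph r N)) =
      matching_gen_poly ?E + [:0, 1:] * matching_gen_poly (insert ?fb (path_edge r ` {3..<3 + c}))"
    by (simp add: edges matching_gen_poly_insert pendant_edge_def)
  also have "\<dots> = path_poly (c + 2) + [:0, 1:] * path_poly c
      + [:0, 1:] * (path_poly c + [:0, 1:] * path_poly (c - 2))"
    using matching_gen_poly_path_pendant[of B r 1 "c + 2"] matching_gen_poly_path_pendant[of B r 3 c]
      assms(1) by (simp add: add.commute)
  also have "\<dots> = [:1, 4:] * path_poly (N - 4)"
    using path_poly_two_pendants[OF N(2)] by (simp add: N(1))
  finally show ?thesis .
qed

lemma card_vertices_W_graph:
  assumes "2 \<le> r" "5 \<le> N"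
  shows "card (fst (W_graph r N)) = N * (r - 1) + 1"
proof -
  let ?P = "\<Union> (path_edge r ` {1..N - 2})" and ?X = "{1..r - 1}"
  have "V 2 \<in> ?P" "V (N - 2) \<in> ?P"
    using assms(2) unfolding path_edge_def by (auto intro!: UN_I[of 2] UN_I[of "N - 2"])
  then have "fst (W_graph r N) = (?P \<union> A ` ?X) \<union> B ` ?X"
    by (simp add: W_graph_eq pendant_edge_def insert_absorb Un_ac)
  moreover have card_P: "card ?P = (N - 2) * (r - 1) + 1"
    using assms by (intro card_Union_path_edges) auto
  moreover have "card (?P \<union> A ` ?X) = card ?P + card (A ` ?X)"
    using card_P by (intro card_Un_disjoint) (auto simp: path_edge_def intro: card_ge_0_finite)
  moreover have "card ((?P \<union> A ` ?X) \<union> B ` ?X) = card (?P \<union> A ` ?X) + card (B ` ?X)"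
    using card_P by (intro card_Un_disjoint) (auto simp: path_edge_def intro: card_ge_0_finite)
  moreover have "card (A ` ?X) = r - 1" "card (B ` ?X) = r - 1"
    by (simp_all add: card_image inj_on_def)
  moreover obtain M where "N = M + 2"
    using assms(2) by (intro that[of "N - 2"]) simp
  ultimately show ?thesis by (simp add: distrib_right)
qed

lemma loose_path_W_graph_invariants:
  assumes "2 \<le> r" "1 \<le> a" "1 \<le> b"
  defines "K \<equiv> disj_union (loose_path r a) (W_graph r (b + 4))"
  shows "finite (snd K)"
    and "card (fst K) = (a + b + 4) * (r - 1) + 2"
    and "matching_gen_poly (snd K) = path_poly a * ([:1, 4:] * path_poly b)"
proof -
  have "finite (snd (loose_path r a))" "finite (snd (W_graph r (b + 4)))"
    by (simp_all add: loose_path_eq W_graph_eq)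
  moreover have "{} \<notin> snd (loose_path r a)"
    by (force simp: loose_path_eq path_edge_def)
  moreover have "matching_gen_poly (snd (loose_path r a)) = path_poly a"
    using matching_gen_poly_path[of r 1 a]
    by (simp add: loose_path_eq atLeastLessThanSuc_atLeastAtMost)
  ultimately show "finite (snd K)"
    and "matching_gen_poly (snd K) = path_poly a * ([:1, 4:] * path_poly b)"
    unfolding K_def using assms(1,3)
    by (simp_all add: finite_edges_disj_union matching_gen_poly_disj_union
        matching_gen_poly_W_graph)
  have "card (fst (loose_path r a)) = a * (r - 1) + 1"
    using card_Union_path_edges[OF assms(2,1)] by (simp add: loose_path_eq)
  moreover have "card (fst (W_graph r (b + 4))) = (b + 4) * (r - 1) + 1"
    using assms(1,3) by (simp add: card_vertices_W_graph)
  ultimately show "card (fst K) = (a + b + 4) * (r - 1) + 2"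
    unfolding K_def
    by (subst card_vertices_disj_union) (auto intro: card_ge_0_finite simp: distrib_right)
qed

theorem lemma10:
  fixes m n r :: nat
  assumes "m \<ge> 6" and "n \<ge> 6" and "r \<ge> 2"
  shows "matching_poly r (disj_union (loose_path r (m - 5)) (W_graph r (n - 1))) =
         matching_poly r (disj_union (loose_path r (n - 5)) (W_graph r (m - 1)))"
proof -
  obtain a b where "m = a + 5" "n = b + 5" "1 \<le> a" "1 \<le> b"
    using assms(1,2) by (intro that[of "m - 5" "n - 5"]) simp_all
  note ab = loose_path_W_graph_invariants[OF assms(3) \<open>1 \<le> a\<close> \<open>1 \<le> b\<close>]
  note ba = loose_path_W_graph_invariants[OF assms(3) \<open>1 \<le> b\<close> \<open>1 \<le> a\<close>]
  have "matching_poly r (disj_union (loose_path r a) (W_graph r (b + 4))) =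
      matching_poly r (disj_union (loose_path r b) (W_graph r (a + 4)))"
    by (rule matching_poly_eqI) (simp_all only: ab ba ac_simps)
  then show ?thesis using \<open>m = a + 5\<close> \<open>n = b + 5\<close> by (simp add: add.commute)
qed

end
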